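(* Let $(X,p)$ and $(Y,d)$ be metric spaces with $(Y,d)$ separable, and let $F: X \Rightarrow Y$ be a (total) multi-valued function. Let $P \subseteq X$ be the set of points $x \in X$ at which $F$ is continuous. (a) If $F(x)$ is compact for every $x \in X$, then $P$ is a $\Pi^0_2$ (i.e. $G_\delta$) subset of $X$. (b) If $Y$ is exhaustible by compact sets and $F(x)$ is closed for every $x \in X$, then $P$ is a $\Sigma^0_3$ subset of $X$.
   Context: A multi-valued function $F: X \Rightarrow Y$ assigns to each $x\in X$ a set $F(x)\subseteq Y$; it is identified with its graph $\{(x,y): y \in F(x)\}\subseteq X\times Y$, and all multi-valued functions are assumed total, i.e. $F(x)\neq\emptyset$ for all $x$. $F$ is continuous at $x$ if there is some $y \in F(x)$ such that for every $\varepsilon>0$ there is $\delta>0$ such that for every $x' \in B_p(x,\delta)$ there is $y' \in F(x')$ with $d(y,y')<\varepsilon$. A space $Y$ is exhaustible by compact sets if there are compact sets $K_n \subseteq Y$ ($n\in\omega$) with $K_n$ contained in the interior of $K_{n+1}$ for all $n$ and $Y=\bigcup_n K_n$. Borel hierarchy: $\Sigma^0_1$ = open sets; $\Sigma^0_{n+1}$ = countable unions $\bigcup_i A_i$ where each $X\setminus A_i\in\Sigma^0_{k_i}$ for some $k_i\le n$; $\Pi^0_n$ = complements of $\Sigma^0_n$ sets. Thus $\Pi^0_2$ = $G_\delta$ and $\Sigma^0_3$ = countable unions of $G_\delta$ sets. *)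

theory Defs
  imports "HOL-Analysis.Analysis"
begin

definition mv_continuous_at :: "('a::metric_space \<Rightarrow> 'b::metric_space set) \<Rightarrow> 'a \<Rightarrow> bool" where
  "mv_continuous_at F x \<longleftrightarrow>
     (\<exists>y \<in> F x. \<forall>\<epsilon>>0. \<exists>\<delta>>0. \<forall>x' \<in> ball x \<delta>. \<exists>y' \<in> F x'. dist y y' < \<epsilon>)"

definition separable_type :: "'a::metric_space itself \<Rightarrow> bool" where
  "separable_type _ \<longleftrightarrow> (\<exists>D::'a set. countable D \<and> closure D = UNIV)"

definition exhaustible_by_compact :: "'a::metric_space itself \<Rightarrow> bool" where
  "exhaustible_by_compact _ \<longleftrightarrow>
     (\<exists>K::nat \<Rightarrow> 'a set. (\<forall>n. compact (K n) \<and> K n \<subseteq> interior (K (Suc n))) \<and> \<Union>(range K) = UNIV)"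

definition Sigma02 :: "'a::topological_space set \<Rightarrow> bool" where
  "Sigma02 S \<longleftrightarrow> (\<exists>A::nat \<Rightarrow> 'a set. (\<forall>i. open (- A i)) \<and> S = \<Union>(range A))"

definition Pi02 :: "'a::topological_space set \<Rightarrow> bool" where
  "Pi02 S \<longleftrightarrow> Sigma02 (- S)"

definition Sigma03 :: "'a::topological_space set \<Rightarrow> bool" where
  "Sigma03 S \<longleftrightarrow> (\<exists>A::nat \<Rightarrow> 'a set. (\<forall>i. open (- A i) \<or> Sigma02 (- A i)) \<and> S = \<Union>(range A))"

end

theory Submission
  imports Defs
begin

text \<open>For \<open>\<epsilon> > 0\<close> and \<open>K \<subseteq> Y\<close>, let \<open>Q(K,\<epsilon>)\<close> be the set of \<open>x\<close> having a neighbourhood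
  on which \<open>F\<close> stays within \<open>\<epsilon>\<close> of one fixed point of \<open>K\<close>. These sets are open, and \<open>F\<close> is
  continuous at \<open>x\<close> exactly when \<open>x \<in> Q({y},\<epsilon>)\<close> for all \<open>\<epsilon>\<close> and some \<open>y \<in> F x\<close>.
  If \<open>K\<close> is compact and \<open>F x\<close> closed, then \<open>x \<in> Q(K,1/(n+1))\<close> for all \<open>n\<close> already gives
  continuity: the approximating points of \<open>K\<close> have a cluster point, which lies in \<open>F x\<close> and
  witnesses continuity. For compact values take \<open>K = F x\<close>, which may be replaced by \<open>Y\<close> at
  the cost of a factor 2 in \<open>\<epsilon>\<close>; so \<open>P = \<Inter>\<^sub>n Q(Y,1/(n+1))\<close>. For closed values and
  \<open>Y = \<Union>\<^sub>m K\<^sub>m\<close>, \<open>P = \<Union>\<^sub>m \<Inter>\<^sub>n Q(K\<^sub>m,1/(n+1))\<close>.\<close>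

definition mv_approx_set :: "('a::metric_space \<Rightarrow> 'b::metric_space set) \<Rightarrow> 'b set \<Rightarrow> real \<Rightarrow> 'a set" where
  "mv_approx_set F K e = {x. \<exists>y\<in>K. \<exists>\<delta>>0. \<forall>x'\<in>ball x \<delta>. \<exists>y'\<in>F x'. dist y y' < e}"

lemma mv_approx_set_eq_UN_interior:
  "mv_approx_set F K e = (\<Union>y\<in>K. interior {x'. \<exists>y'\<in>F x'. dist y y' < e})"
  by (auto simp: mv_approx_set_def mem_interior subset_eq; meson)

lemma open_mv_approx_set: "open (mv_approx_set F K e)"
  by (simp add: mv_approx_set_eq_UN_interior open_UN)

lemma mv_approx_set_mono:
  assumes "K \<subseteq> K'" and "e \<le> e'"
  shows "mv_approx_set F K e \<subseteq> mv_approx_set F K' e'"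
proof
  fix x assume "x \<in> mv_approx_set F K e"
  then obtain y \<delta> where "y \<in> K" "\<delta> > 0" and y: "\<forall>x'\<in>ball x \<delta>. \<exists>y'\<in>F x'. dist y y' < e"
    unfolding mv_approx_set_def by blast
  have "\<forall>x'\<in>ball x \<delta>. \<exists>y'\<in>F x'. dist y y' < e'"
    using y \<open>e \<le> e'\<close> by (meson order_less_le_trans)
  then show "x \<in> mv_approx_set F K' e'"
    unfolding mv_approx_set_def using \<open>y \<in> K\<close> \<open>K \<subseteq> K'\<close> \<open>\<delta> > 0\<close> by blast
qed

lemma INT_mv_approx_set:
  "(\<Inter>n. mv_approx_set F K (1 / Suc n)) = {x. \<forall>e>0. x \<in> mv_approx_set F K e}"
proof (intro equalityI subsetI)
  fix x assume x: "x \<in> (\<Inter>n. mv_approx_set F K (1 / Suc n))"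
  have "x \<in> mv_approx_set F K e" if "e > 0" for e
  proof -
    obtain n :: nat where "1 / Suc n < e" using nat_approx_posE[OF \<open>e > 0\<close>] by blast
    then show ?thesis using x mv_approx_set_mono[of K K "1 / Suc n" e F] by auto
  qed
  then show "x \<in> {x. \<forall>e>0. x \<in> mv_approx_set F K e}" by blast
qed auto

lemma mv_continuous_at_iff_approx_singleton:
  "mv_continuous_at F x \<longleftrightarrow> (\<exists>y\<in>F x. \<forall>e>0. x \<in> mv_approx_set F {y} e)"
  unfolding mv_continuous_at_def mv_approx_set_def by blast

lemma mv_approx_set_UNIV_imp_self:
  assumes "x \<in> mv_approx_set F UNIV e"
  shows "x \<in> mv_approx_set F (F x) (2 * e)"
proof -
  obtain y \<delta> where "\<delta> > 0" and y: "\<forall>x'\<in>ball x \<delta>. \<exists>y'\<in>F x'. dist y y' < e"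
    using assms unfolding mv_approx_set_def by blast
  then obtain z where z: "z \<in> F x" "dist y z < e"
    using centre_in_ball by blast
  have "\<forall>x'\<in>ball x \<delta>. \<exists>y'\<in>F x'. dist z y' < 2 * e"
  proof
    fix x' assume "x' \<in> ball x \<delta>"
    then obtain y' where "y' \<in> F x'" "dist y y' < e" using y by blast
    moreover have "dist z y' \<le> dist y z + dist y y'" by (rule dist_triangle3)
    ultimately have "dist z y' < 2 * e" using z(2) by linarith
    then show "\<exists>y'\<in>F x'. dist z y' < 2 * e" using \<open>y' \<in> F x'\<close> by blast
  qed
  then show ?thesis
    unfolding mv_approx_set_def using z(1) \<open>\<delta> > 0\<close> by blast
qed

lemma mv_continuous_at_if_approx_compact:
  fixes F :: "'a::metric_space \<Rightarrow> 'b::metric_space set"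
  assumes "compact K" and "closed (F x)"
    and approx: "\<forall>e>0. x \<in> mv_approx_set F K e"
  shows "mv_continuous_at F x"
proof -
  have "x \<in> mv_approx_set F K (1 / Suc n)" for n
    using approx by simp
  then have "\<forall>n. \<exists>y. y \<in> K \<and> (\<exists>\<delta>>0. \<forall>x'\<in>ball x \<delta>. \<exists>y'\<in>F x'. dist y y' < 1 / Suc n)"
    unfolding mv_approx_set_def by blast
  from choice[OF this] obtain y
    where "\<forall>n. y n \<in> K \<and> (\<exists>\<delta>>0. \<forall>x'\<in>ball x \<delta>. \<exists>y'\<in>F x'. dist (y n) y' < 1 / Suc n)"
    by blast
  then have yK: "\<forall>n. y n \<in> K"
    and y: "\<And>n. \<exists>\<delta>>0. \<forall>x'\<in>ball x \<delta>. \<exists>y'\<in>F x'. dist (y n) y' < 1 / Suc n"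
    by simp_all
  obtain l r where "strict_mono r" and l: "(y \<circ> r) \<longlonglongrightarrow> l"
    using seq_compactE[OF compact_imp_seq_compact[OF \<open>compact K\<close>]] yK by blast
  have close_to_l: "\<exists>\<delta>>0. \<forall>x'\<in>ball x \<delta>. \<exists>y'\<in>F x'. dist l y' < e" if "e > 0" for e
  proof -
    have "(\<lambda>k. 1 / real (Suc (r k))) \<longlonglongrightarrow> 0"
      using LIMSEQ_subseq_LIMSEQ[OF LIMSEQ_Suc[OF lim_const_over_n[of 1]] \<open>strict_mono r\<close>]
      by (simp add: o_def)
    then have "\<forall>\<^sub>F k in sequentially. 1 / real (Suc (r k)) < e / 2"
      by (rule order_tendstoD(2)) (use \<open>e > 0\<close> in simp)
    moreover have "\<forall>\<^sub>F k in sequentially. dist (y (r k)) l < e / 2"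
      using tendstoD[OF l, of "e / 2"] \<open>e > 0\<close> by (simp add: o_def)
    ultimately have "\<forall>\<^sub>F k in sequentially. 1 / real (Suc (r k)) < e / 2 \<and> dist (y (r k)) l < e / 2"
      by (rule eventually_conj)
    then obtain k where "1 / real (Suc (r k)) < e / 2" "dist (y (r k)) l < e / 2"
      unfolding eventually_sequentially by blast
    then obtain n where n: "dist (y n) l < e / 2" "1 / real (Suc n) < e / 2"
      by blast
    obtain \<delta> where "\<delta> > 0" and \<delta>: "\<forall>x'\<in>ball x \<delta>. \<exists>y'\<in>F x'. dist (y n) y' < 1 / Suc n"
      using y by blast
    have "\<forall>x'\<in>ball x \<delta>. \<exists>y'\<in>F x'. dist l y' < e"
    proof
      fix x' assume "x' \<in> ball x \<delta>"
      then obtain y' where "y' \<in> F x'" "dist (y n) y' < 1 / Suc n" using \<delta> by blast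
      moreover have "dist l y' \<le> dist (y n) l + dist (y n) y'" by (rule dist_triangle3)
      ultimately have "dist l y' < e" using n by linarith
      then show "\<exists>y'\<in>F x'. dist l y' < e" using \<open>y' \<in> F x'\<close> by blast
    qed
    then show ?thesis using \<open>\<delta> > 0\<close> by blast
  qed
  have "l \<in> F x"
  proof -
    have "\<exists>y'\<in>F x. dist y' l < e" if "e > 0" for e
    proof -
      obtain \<delta> where "\<delta> > 0" "\<forall>x'\<in>ball x \<delta>. \<exists>y'\<in>F x'. dist l y' < e"
        using close_to_l \<open>e > 0\<close> by blast
      then show ?thesis using centre_in_ball by (metis dist_commute)
    qed
    then show ?thesis
      using closed_approachable[OF \<open>closed (F x)\<close>] by blast
  qed
  then show ?thesis
    unfolding mv_continuous_at_def using close_to_l by blast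
qed

lemma mv_continuous_at_iff_approx_UNIV:
  assumes "compact (F x)"
  shows "mv_continuous_at F x \<longleftrightarrow> (\<forall>e>0. x \<in> mv_approx_set F UNIV e)"
proof
  assume "mv_continuous_at F x"
  then obtain y where "\<forall>e>0. x \<in> mv_approx_set F {y} e"
    unfolding mv_continuous_at_iff_approx_singleton by blast
  then show "\<forall>e>0. x \<in> mv_approx_set F UNIV e"
    using mv_approx_set_mono[of "{y}" UNIV, OF subset_UNIV order_refl] by blast
next
  assume approx: "\<forall>e>0. x \<in> mv_approx_set F UNIV e"
  have "x \<in> mv_approx_set F (F x) e" if "e > 0" for e
    using mv_approx_set_UNIV_imp_self[of x F "e / 2"] approx \<open>e > 0\<close> by simp
  then show "mv_continuous_at F x"
    using mv_continuous_at_if_approx_compact[of "F x" F x] assms compact_imp_closed by blast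
qed

lemma mv_continuous_at_iff_approx_cover:
  assumes K: "\<And>m. compact (K m)" and cover: "\<Union>(range K) = UNIV" and "closed (F x)"
  shows "mv_continuous_at F x \<longleftrightarrow> (\<exists>m. \<forall>e>0. x \<in> mv_approx_set F (K m) e)"
proof
  assume "mv_continuous_at F x"
  then obtain y where y: "\<forall>e>0. x \<in> mv_approx_set F {y} e"
    unfolding mv_continuous_at_iff_approx_singleton by blast
  obtain m where "y \<in> K m" using cover by blast
  then have "\<forall>e>0. x \<in> mv_approx_set F (K m) e"
    using y mv_approx_set_mono[of "{y}" "K m", OF _ order_refl] by blast
  then show "\<exists>m. \<forall>e>0. x \<in> mv_approx_set F (K m) e" ..
next
  assume "\<exists>m. \<forall>e>0. x \<in> mv_approx_set F (K m) e"
  then obtain m where "\<forall>e>0. x \<in> mv_approx_set F (K m) e" ..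
  then show "mv_continuous_at F x"
    using mv_continuous_at_if_approx_compact[of "K m" F x] K \<open>closed (F x)\<close> by blast
qed

lemma Pi02_INT_open:
  fixes U :: "nat \<Rightarrow> 'a::topological_space set"
  assumes "\<And>n. open (U n)"
  shows "Pi02 (\<Inter>n. U n)"
  unfolding Pi02_def Sigma02_def by (intro exI[of _ "\<lambda>n. - U n"]) (simp add: assms)

lemma Sigma03_UN_Pi02:
  fixes A :: "nat \<Rightarrow> 'a::topological_space set"
  assumes "\<And>m. Pi02 (A m)"
  shows "Sigma03 (\<Union>m. A m)"
  unfolding Sigma03_def by (intro exI[of _ A]) (simp add: assms[unfolded Pi02_def])

theorem theorem2p1:
  fixes F :: "'a::metric_space \<Rightarrow> 'b::metric_space set"
  assumes sep: "separable_type TYPE('b)"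
    and total: "\<forall>x. F x \<noteq> {}"
  shows "((\<forall>x. compact (F x)) \<longrightarrow> Pi02 {x. mv_continuous_at F x})
       \<and> ((exhaustible_by_compact TYPE('b) \<and> (\<forall>x. closed (F x))) \<longrightarrow> Sigma03 {x. mv_continuous_at F x})"
proof (intro conjI impI)
  assume "\<forall>x. compact (F x)"
  then have "{x. mv_continuous_at F x} = (\<Inter>n. mv_approx_set F UNIV (1 / Suc n))"
    unfolding INT_mv_approx_set by (simp add: mv_continuous_at_iff_approx_UNIV)
  then show "Pi02 {x. mv_continuous_at F x}"
    by (simp add: Pi02_INT_open open_mv_approx_set)
next
  assume "exhaustible_by_compact TYPE('b) \<and> (\<forall>x. closed (F x))"
  then obtain K :: "nat \<Rightarrow> 'b set" where K: "\<And>m. compact (K m)" "\<Union>(range K) = UNIV"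
    and closed: "\<forall>x. closed (F x)"
    unfolding exhaustible_by_compact_def by blast
  have "{x. mv_continuous_at F x} = (\<Union>m. \<Inter>n. mv_approx_set F (K m) (1 / Suc n))"
    unfolding INT_mv_approx_set using mv_continuous_at_iff_approx_cover[OF K] closed by auto
  then show "Sigma03 {x. mv_continuous_at F x}"
    by (simp add: Sigma03_UN_Pi02 Pi02_INT_open open_mv_approx_set)
qed

end
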